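(* Let $n\ge 2$ and let $f:(\mathbb{C}^n,0)\to(\mathbb{C},0)$ be a holomorphic function germ with $f(0)=0$ having an isolated critical point at the origin, with Milnor number $\mu$ and Tjurina number $\tau$. If $\mu/\tau>n-1$, then $f^{n-1}\notin J_f$.
   Context: Let $S=\mathbb{C}\{x_1,\dots,x_n\}$ be the ring of convergent power series, $J_f=(\partial f/\partial x_1,\dots,\partial f/\partial x_n)\subset S$ the Jacobian ideal, $\mu=\dim_{\mathbb{C}}S/J_f$ and $\tau=\dim_{\mathbb{C}}S/(J_f,f)$. *)

theory Defs
  imports "HOL-Analysis.Analysis"
begin

definition holo_near0 :: "(complex^'n \<Rightarrow> complex) \<Rightarrow> bool" where
  "holo_near0 f \<longleftrightarrow> (\<exists>r>0. \<forall>z\<in>ball 0 r. \<exists>L. (f has_derivative L) (at z) \<and>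
       (\<forall>c v. L (c *s v) = c * L v))"

definition cpartial :: "'n::finite \<Rightarrow> (complex^'n \<Rightarrow> complex) \<Rightarrow> complex^'n \<Rightarrow> complex" where
  "cpartial i f z = frechet_derivative f (at z) (axis i 1)"

definition germ_in_ideal :: "(complex^'n \<Rightarrow> complex) set \<Rightarrow> (complex^'n \<Rightarrow> complex) \<Rightarrow> bool" where
  "germ_in_ideal G h \<longleftrightarrow> (\<exists>a. (\<forall>g\<in>G. holo_near0 (a g)) \<and>
       eventually (\<lambda>z. h z = (\<Sum>g\<in>G. a g z * g z)) (nhds 0))"

text \<open>dim_C (S / (G)): the least size of a family of germs spanning S modulo the ideal (G).\<close>
definition germ_colength :: "(complex^'n \<Rightarrow> complex) set \<Rightarrow> nat" where
  "germ_colength G = (LEAST k. \<exists>B. finite B \<and> card B = k \<and> (\<forall>b\<in>B. holo_near0 b) \<and>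
       (\<forall>h. holo_near0 h \<longrightarrow> (\<exists>c. germ_in_ideal G (\<lambda>z. h z - (\<Sum>b\<in>B. c b * b z)))))"

definition jacobian_gens :: "(complex^'n::finite \<Rightarrow> complex) \<Rightarrow> (complex^'n \<Rightarrow> complex) set" where
  "jacobian_gens f = range (\<lambda>i. cpartial i f)"

definition milnor_number :: "(complex^'n::finite \<Rightarrow> complex) \<Rightarrow> nat" where
  "milnor_number f = germ_colength (jacobian_gens f)"

definition tjurina_number :: "(complex^'n::finite \<Rightarrow> complex) \<Rightarrow> nat" where
  "tjurina_number f = germ_colength (insert f (jacobian_gens f))"

definition isolated_critical_point0 :: "(complex^'n::finite \<Rightarrow> complex) \<Rightarrow> bool" where
  "isolated_critical_point0 f \<longleftrightarrow> (\<forall>i. cpartial i f 0 = 0) \<and>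
     (\<exists>r>0. \<forall>z\<in>ball 0 r. (\<forall>i. cpartial i f z = 0) \<longrightarrow> z = 0)"

end

theory Submission
  imports Defs
begin

text \<open>If \<open>f\<^sup>N\<close> lies in an ideal \<open>I\<close>, then the products \<open>f\<^sup>k b\<close> with \<open>k < N\<close> and \<open>b\<close>
  running through a spanning set of \<open>S/(I, f)\<close> span \<open>S/I\<close>: peel off one power of \<open>f\<close> at a time
  and absorb the remainder \<open>a f\<^sup>N\<close> into \<open>I\<close>. Hence \<open>dim S/I \<le> N \<cdot> dim S/(I, f)\<close>, and for
  \<open>I = J\<^sub>f\<close>, \<open>N = n - 1\<close> this gives \<open>\<mu> \<le> (n - 1) \<tau>\<close>.\<close>

lemma holo_near0_iff_eventually:
  "holo_near0 f \<longleftrightarrow>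
     (\<forall>\<^sub>F z in nhds 0. \<exists>L. (f has_derivative L) (at z) \<and> (\<forall>c v. L (c *s v) = c * L v))"
  unfolding holo_near0_def eventually_nhds_metric by (auto simp: dist_commute)

lemma holo_near0_const: "holo_near0 (\<lambda>z. k)"
  unfolding holo_near0_iff_eventually
  by (intro always_eventually allI exI[of _ "\<lambda>_. 0"]) simp

lemma holo_near0_add:
  assumes "holo_near0 f" "holo_near0 g"
  shows "holo_near0 (\<lambda>z. f z + g z)"
  using assms unfolding holo_near0_iff_eventually
proof eventually_elim
  case (elim z)
  then obtain L M where "(f has_derivative L) (at z)" "\<forall>c v. L (c *s v) = c * L v"
    and "(g has_derivative M) (at z)" "\<forall>c v. M (c *s v) = c * M v"
    by blast
  then show ?case
    by (intro exI[of _ "\<lambda>v. L v + M v"]) (auto intro: has_derivative_add simp: algebra_simps)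
qed

lemma holo_near0_mult:
  assumes "holo_near0 f" "holo_near0 g"
  shows "holo_near0 (\<lambda>z. f z * g z)"
  using assms unfolding holo_near0_iff_eventually
proof eventually_elim
  case (elim z)
  then obtain L M where L: "(f has_derivative L) (at z)" "\<forall>c v. L (c *s v) = c * L v"
    and M: "(g has_derivative M) (at z)" "\<forall>c v. M (c *s v) = c * M v"
    by blast
  have "((\<lambda>z. f z * g z) has_derivative (\<lambda>v. f z * M v + L v * g z)) (at z)"
    using L(1) M(1) by (rule has_derivative_mult)
  with L(2) M(2) show ?case
    by (intro exI[of _ "\<lambda>v. f z * M v + L v * g z"]) (simp add: algebra_simps)
qed

lemma holo_near0_power: "holo_near0 f \<Longrightarrow> holo_near0 (\<lambda>z. f z ^ m)"
  by (induction m) (auto intro: holo_near0_const holo_near0_mult)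

lemma germ_in_ideal_zero: "germ_in_ideal G (\<lambda>z. 0)"
  unfolding germ_in_ideal_def by (auto intro!: exI[of _ "\<lambda>_ _. 0"] holo_near0_const)

lemma germ_in_ideal_eventually_cong:
  assumes "germ_in_ideal G g" "\<forall>\<^sub>F z in nhds 0. g z = h z"
  shows "germ_in_ideal G h"
proof -
  obtain a where a: "\<forall>p\<in>G. holo_near0 (a p)" "\<forall>\<^sub>F z in nhds 0. g z = (\<Sum>p\<in>G. a p z * p z)"
    using assms(1) unfolding germ_in_ideal_def by blast
  from assms(2) a(2) have "\<forall>\<^sub>F z in nhds 0. h z = (\<Sum>p\<in>G. a p z * p z)"
    by eventually_elim simp
  with a(1) show ?thesis
    unfolding germ_in_ideal_def by blast
qed

lemma germ_in_ideal_add: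
  assumes "germ_in_ideal G g" "germ_in_ideal G h"
  shows "germ_in_ideal G (\<lambda>z. g z + h z)"
proof -
  obtain a where a: "\<forall>p\<in>G. holo_near0 (a p)" "\<forall>\<^sub>F z in nhds 0. g z = (\<Sum>p\<in>G. a p z * p z)"
    using assms(1) unfolding germ_in_ideal_def by blast
  obtain b where b: "\<forall>p\<in>G. holo_near0 (b p)" "\<forall>\<^sub>F z in nhds 0. h z = (\<Sum>p\<in>G. b p z * p z)"
    using assms(2) unfolding germ_in_ideal_def by blast
  show ?thesis
    unfolding germ_in_ideal_def
  proof (intro exI[of _ "\<lambda>p z. a p z + b p z"] conjI ballI)
    show "holo_near0 (\<lambda>z. a p z + b p z)" if "p \<in> G" for p
      using a b that by (simp add: holo_near0_add)
    show "\<forall>\<^sub>F z in nhds 0. g z + h z = (\<Sum>p\<in>G. (a p z + b p z) * p z)"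
      using a(2) b(2) by eventually_elim (simp add: sum.distrib distrib_right)
  qed
qed

lemma germ_in_ideal_mult_left:
  assumes "holo_near0 u" "germ_in_ideal G g"
  shows "germ_in_ideal G (\<lambda>z. u z * g z)"
proof -
  obtain a where a: "\<forall>p\<in>G. holo_near0 (a p)" "\<forall>\<^sub>F z in nhds 0. g z = (\<Sum>p\<in>G. a p z * p z)"
    using assms(2) unfolding germ_in_ideal_def by blast
  show ?thesis
    unfolding germ_in_ideal_def
  proof (intro exI[of _ "\<lambda>p z. u z * a p z"] conjI ballI)
    show "holo_near0 (\<lambda>z. u z * a p z)" if "p \<in> G" for p
      using assms(1) a that by (simp add: holo_near0_mult)
    show "\<forall>\<^sub>F z in nhds 0. u z * g z = (\<Sum>p\<in>G. u z * a p z * p z)"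
      using a(2) by eventually_elim (simp add: sum_distrib_left mult.assoc)
  qed
qed

lemma germ_in_ideal_insert:
  assumes "finite G" "germ_in_ideal G h"
  shows "germ_in_ideal (insert f G) h"
proof (cases "f \<in> G")
  case True
  then show ?thesis using assms(2) by (simp add: insert_absorb)
next
  case False
  obtain a where a: "\<forall>p\<in>G. holo_near0 (a p)" "\<forall>\<^sub>F z in nhds 0. h z = (\<Sum>p\<in>G. a p z * p z)"
    using assms(2) unfolding germ_in_ideal_def by blast
  have "(\<Sum>p\<in>G. (a(f := (\<lambda>_. 0))) p z * p z) = (\<Sum>p\<in>G. a p z * p z)" for z
    using False by (intro sum.cong) auto
  then show ?thesis
    unfolding germ_in_ideal_def using a False assms(1)
    by (intro exI[of _ "a(f := (\<lambda>_. 0))"]) (auto simp: holo_near0_const)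
qed

lemma germ_in_ideal_insertE:
  assumes "finite G" "germ_in_ideal (insert f G) h"
  obtains a where "holo_near0 a" "germ_in_ideal G (\<lambda>z. h z - a z * f z)"
proof (cases "f \<in> G")
  case True
  then have "germ_in_ideal G (\<lambda>z. h z - 0 * f z)"
    using assms(2) by (simp add: insert_absorb)
  with holo_near0_const that show ?thesis by blast
next
  case False
  obtain a where a: "\<forall>p\<in>insert f G. holo_near0 (a p)"
    "\<forall>\<^sub>F z in nhds 0. h z = (\<Sum>p\<in>insert f G. a p z * p z)"
    using assms(2) unfolding germ_in_ideal_def by blast
  have "\<forall>\<^sub>F z in nhds 0. h z - a f z * f z = (\<Sum>p\<in>G. a p z * p z)"
    using a(2) by eventually_elim (use False assms(1) in simp)
  then have "germ_in_ideal G (\<lambda>z. h z - a f z * f z)"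
    unfolding germ_in_ideal_def using a(1) by blast
  with a(1) that show ?thesis by blast
qed

definition spans_modulo :: "(complex^'n \<Rightarrow> complex) set \<Rightarrow> (complex^'n \<Rightarrow> complex) set \<Rightarrow> bool" where
  "spans_modulo G B \<longleftrightarrow>
     (\<forall>h. holo_near0 h \<longrightarrow> (\<exists>c. germ_in_ideal G (\<lambda>z. h z - (\<Sum>b\<in>B. c b * b z))))"

lemma germ_colength_spans_modulo:
  "germ_colength G =
     (LEAST k. \<exists>B. finite B \<and> card B = k \<and> (\<forall>b\<in>B. holo_near0 b) \<and> spans_modulo G B)"
  unfolding germ_colength_def spans_modulo_def ..

lemma spans_modulo_insert: "finite G \<Longrightarrow> spans_modulo G B \<Longrightarrow> spans_modulo (insert f G) B"
  unfolding spans_modulo_def using germ_in_ideal_insert by blast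

lemma spans_modulo_image:
  fixes G :: "(complex^'n \<Rightarrow> complex) set"
  assumes "finite I"
    and span: "\<And>h. holo_near0 h \<Longrightarrow> \<exists>c. germ_in_ideal G (\<lambda>z. h z - (\<Sum>i\<in>I. c i * \<phi> i z))"
  shows "spans_modulo G (\<phi> ` I)"
  unfolding spans_modulo_def
proof (intro allI impI)
  fix h :: "complex^'n \<Rightarrow> complex"
  assume "holo_near0 h"
  then obtain c where c: "germ_in_ideal G (\<lambda>z. h z - (\<Sum>i\<in>I. c i * \<phi> i z))"
    using span by blast
  define d where "d b = (\<Sum>i\<in>{i\<in>I. \<phi> i = b}. c i)" for b
  have "(\<Sum>i\<in>I. c i * \<phi> i z) = (\<Sum>b\<in>\<phi> ` I. \<Sum>i\<in>{i\<in>I. \<phi> i = b}. c i * \<phi> i z)" for z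
    by (rule sum.image_gen[OF \<open>finite I\<close>])
  also have "\<dots> z = (\<Sum>b\<in>\<phi> ` I. d b * b z)" for z
    unfolding d_def by (intro sum.cong refl) (auto simp: sum_distrib_right)
  finally show "\<exists>d. germ_in_ideal G (\<lambda>z. h z - (\<Sum>b\<in>\<phi> ` I. d b * b z))"
    using c by auto
qed

lemma spans_modulo_insert_expansion:
  assumes "finite G" "holo_near0 f" "spans_modulo (insert f G) B" "holo_near0 h"
  shows "\<exists>c a. holo_near0 a \<and>
     germ_in_ideal G (\<lambda>z. h z - (\<Sum>k<m. f z ^ k * (\<Sum>b\<in>B. c k b * b z)) - a z * f z ^ m)"
proof (induction m)
  case 0
  show ?case
    using germ_in_ideal_zero[of G] by (intro exI[of _ "\<lambda>_ _. 0"] exI[of _ h]) (simp add: assms(4))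
next
  case (Suc m)
  then obtain c a where a: "holo_near0 a"
    and c: "germ_in_ideal G (\<lambda>z. h z - (\<Sum>k<m. f z ^ k * (\<Sum>b\<in>B. c k b * b z)) - a z * f z ^ m)"
    by blast
  obtain d where "germ_in_ideal (insert f G) (\<lambda>z. a z - (\<Sum>b\<in>B. d b * b z))"
    using assms(3) a unfolding spans_modulo_def by blast
  then obtain a' where a': "holo_near0 a'"
    and d: "germ_in_ideal G (\<lambda>z. a z - (\<Sum>b\<in>B. d b * b z) - a' z * f z)"
    using germ_in_ideal_insertE[OF assms(1)] by blast
  define c' where "c' = c(m := d)"
  have "germ_in_ideal G (\<lambda>z.
      (h z - (\<Sum>k<m. f z ^ k * (\<Sum>b\<in>B. c k b * b z)) - a z * f z ^ m)
      + f z ^ m * (a z - (\<Sum>b\<in>B. d b * b z) - a' z * f z))"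
    using c d by (intro germ_in_ideal_add germ_in_ideal_mult_left holo_near0_power assms(2))
  moreover have "(\<Sum>k<Suc m. f z ^ k * (\<Sum>b\<in>B. c' k b * b z))
      = (\<Sum>k<m. f z ^ k * (\<Sum>b\<in>B. c k b * b z)) + f z ^ m * (\<Sum>b\<in>B. d b * b z)" for z
    unfolding c'_def by simp
  ultimately have "germ_in_ideal G (\<lambda>z.
      h z - (\<Sum>k<Suc m. f z ^ k * (\<Sum>b\<in>B. c' k b * b z)) - a' z * f z ^ Suc m)"
    by (simp add: algebra_simps)
  with a' show ?case by blast
qed

lemma spans_modulo_power_products:
  fixes G :: "(complex^'n \<Rightarrow> complex) set"
  assumes "finite G" "holo_near0 f" "finite B" "spans_modulo (insert f G) B"
    and "germ_in_ideal G (\<lambda>z. f z ^ N)"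
  shows "spans_modulo G ((\<lambda>(k, b) z. f z ^ k * b z) ` ({..<N} \<times> B))"
proof (rule spans_modulo_image)
  show "finite ({..<N} \<times> B)" using assms(3) by simp
  fix h :: "complex^'n \<Rightarrow> complex"
  assume "holo_near0 h"
  then obtain c a where "holo_near0 a"
    and c: "germ_in_ideal G (\<lambda>z. h z - (\<Sum>k<N. f z ^ k * (\<Sum>b\<in>B. c k b * b z)) - a z * f z ^ N)"
    using spans_modulo_insert_expansion[OF assms(1,2,4)] by blast
  then have "germ_in_ideal G (\<lambda>z.
      (h z - (\<Sum>k<N. f z ^ k * (\<Sum>b\<in>B. c k b * b z)) - a z * f z ^ N) + a z * f z ^ N)"
    using assms(5) by (intro germ_in_ideal_add germ_in_ideal_mult_left)
  moreover have "(\<Sum>k<N. f z ^ k * (\<Sum>b\<in>B. c k b * b z))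
      = (\<Sum>(k, b)\<in>{..<N} \<times> B. c k b * (f z ^ k * b z))" for z
    by (simp add: sum.cartesian_product[symmetric] sum_distrib_left mult.left_commute)
  ultimately show "\<exists>d. germ_in_ideal G
      (\<lambda>z. h z - (\<Sum>i\<in>{..<N} \<times> B. d i * (case i of (k, b) \<Rightarrow> \<lambda>z. f z ^ k * b z) z))"
    by (intro exI[of _ "\<lambda>(k, b). c k b"]) (simp add: case_prod_unfold)
qed

lemma germ_colength_le_power_mult:
  assumes "finite G" "holo_near0 f" "N > 0" "germ_in_ideal G (\<lambda>z. f z ^ N)"
  shows "germ_colength G \<le> N * germ_colength (insert f G)"
proof (cases "\<exists>B. finite B \<and> (\<forall>b\<in>B. holo_near0 b) \<and> spans_modulo (insert f G) B")
  case True
  then obtain B where B: "finite B" "card B = germ_colength (insert f G)"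
    "\<forall>b\<in>B. holo_near0 b" "spans_modulo (insert f G) B"
    unfolding germ_colength_spans_modulo by (smt (verit) LeastI_ex)
  define B' where "B' = (\<lambda>(k, b) z. f z ^ k * b z) ` ({..<N} \<times> B)"
  have "finite B'" "\<forall>b\<in>B'. holo_near0 b" "spans_modulo G B'"
    using B assms spans_modulo_power_products
    by (auto simp: B'_def intro!: holo_near0_mult holo_near0_power)
  then have "germ_colength G \<le> card B'"
    unfolding germ_colength_spans_modulo by (blast intro: Least_le)
  also have "card B' \<le> N * card B"
    unfolding B'_def using card_image_le[of "{..<N} \<times> B"] B(1) by (simp add: card_cartesian_product)
  finally show ?thesis using B(2) by simp
next
  case False
  \<comment> \<open>then neither quotient has a finite spanning set and both colengths are the same \<open>LEAST\<close> of an empty predicate\<close>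
  then have "germ_colength G = germ_colength (insert f G)"
    unfolding germ_colength_spans_modulo using spans_modulo_insert[OF assms(1)] by metis
  then show ?thesis using assms(3) by simp
qed

theorem mainTheorem3:
  fixes f :: "complex^'n::finite \<Rightarrow> complex"
  assumes "CARD('n) \<ge> 2"
    and "holo_near0 f"
    and "f 0 = 0"
    and "isolated_critical_point0 f"
    and "real (milnor_number f) / real (tjurina_number f) > real (CARD('n) - 1)"
  shows "\<not> germ_in_ideal (jacobian_gens f) (\<lambda>z. f z ^ (CARD('n) - 1))"
proof
  assume "germ_in_ideal (jacobian_gens f) (\<lambda>z. f z ^ (CARD('n) - 1))"
  moreover have "finite (jacobian_gens f)"
    unfolding jacobian_gens_def by simp
  ultimately have "milnor_number f \<le> (CARD('n) - 1) * tjurina_number f"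
    unfolding milnor_number_def tjurina_number_def
    using assms(1,2) by (intro germ_colength_le_power_mult) auto
  then have "real (milnor_number f) \<le> real (CARD('n) - 1) * real (tjurina_number f)"
    by (simp only: of_nat_le_iff flip: of_nat_mult)
  then have "real (milnor_number f) / real (tjurina_number f) \<le> real (CARD('n) - 1)"
    by (cases "tjurina_number f = 0") 
       (simp_all only: of_nat_0 div_by_0 of_nat_0_le_iff pos_divide_le_eq of_nat_0_less_iff neq0_conv)
  with assms(5) show False by simp
qed

end
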